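(* Let $S^A$ denote the complexity function of the family of maximal configurations resistant to altruists (in the one-dimensional Riviera model). Then for every $\rho$ with $\frac{1}{2} < \rho < \frac{2}{3}$, $$S^A(\rho) = (1 - \rho) \ln(1 - \rho) - (2\rho - 1) \ln(2\rho - 1) - (2 - 3\rho) \ln(2 - 3\rho).$$
   Context: A configuration of length $n\ge 0$ is a binary string $c_1c_2\cdots c_n$; $c_k=1$ means lot $k$ is occupied by a house, $c_k=0$ that it is empty. A house at position $k$ is blocked (from sunlight) if $2\le k\le n-1$ and $c_{k-1}=c_{k+1}=1$; lots beyond the ends of the string never obstruct sunlight. A configuration is permissible if no house is blocked. It is maximal (jammed) if it is permissible and, for every $k$ with $c_k=0$, the string obtained by setting $c_k=1$ is not permissible. A maximal configuration is resistant to altruists if, for every $k$ with $c_k=0$, in the string obtained by setting $c_k=1$ some house at a position $l\neq k$ is blocked. Let $J_{k,n}$ be the number of such configurations of length $n$ with exactly $k$ occupied lots; whenever $J_{k,n}=0$ it is redefined to be $1$. The complexity function is $S(\rho)=\sup \limsup_{i\to\infty} \frac{\ln J_{k_i,n_i}}{n_i}$, where the supremum ranges over all sequences $((k_i,n_i))_i$ of pairs of non-negative integers with $n_i\to\infty$ and $k_i/n_i\to\rho$. *)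

theory Defs
  imports "HOL-Analysis.Analysis"
begin

definition occ :: "bool list \<Rightarrow> nat \<Rightarrow> bool" where
  "occ c k \<longleftrightarrow> 1 \<le> k \<and> k \<le> length c \<and> c ! (k - 1)"

definition blocked :: "bool list \<Rightarrow> nat \<Rightarrow> bool" where
  "blocked c k \<longleftrightarrow> occ c k \<and> 2 \<le> k \<and> k + 1 \<le> length c \<and> occ c (k - 1) \<and> occ c (k + 1)"

definition permissible :: "bool list \<Rightarrow> bool" where
  "permissible c \<longleftrightarrow> (\<forall>k. \<not> blocked c k)"

definition maximal_conf :: "bool list \<Rightarrow> bool" where
  "maximal_conf c \<longleftrightarrow> permissible c \<and>
     (\<forall>k \<in> {1..length c}. \<not> occ c k \<longrightarrow> \<not> permissible (c[k - 1 := True]))"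

definition resistant :: "bool list \<Rightarrow> bool" where
  "resistant c \<longleftrightarrow> maximal_conf c \<and>
     (\<forall>k \<in> {1..length c}. \<not> occ c k \<longrightarrow> (\<exists>l. l \<noteq> k \<and> blocked (c[k - 1 := True]) l))"

definition houses :: "bool list \<Rightarrow> nat" where
  "houses c = length (filter id c)"

definition J_A :: "nat \<Rightarrow> nat \<Rightarrow> nat" where
  "J_A k n = (let m = card {c :: bool list. length c = n \<and> houses c = k \<and> resistant c}
              in if m = 0 then 1 else m)"

definition S_A :: "real \<Rightarrow> ereal" where
  "S_A \<rho> = (SUP kn \<in> {kn :: (nat \<Rightarrow> nat) \<times> (nat \<Rightarrow> nat).
                 filterlim (snd kn) at_top sequentially \<and>
                 ((\<lambda>i. real (fst kn i) / real (snd kn i)) \<longlongrightarrow> \<rho>) sequentially}.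
             limsup (\<lambda>i. ereal (ln (real (J_A (fst kn i) (snd kn i))) / real (snd kn i))))"

end

theory Submission
  imports Defs "HOL-Combinatorics.Multiset_Permutations"
begin

(* A configuration is resistant iff, padded with two empty lots at each end, every window of
   five consecutive lots obeys a local rule. Hence a resistant configuration consists of a short
   prefix, a sequence of the blocks 110, 11010, 1100 and a short tail, and conversely every
   sequence of blocks followed by 11 is resistant.

   Upper bound: if the block weights t^length * u^houses sum to at most 1, i.e.
   t^3 u^2 + t^5 u^3 + t^4 u^2 <= 1, then the weighted number of resistant configurations of
   each length stays bounded, so J_{k,n} t^n u^k is bounded and S(rho) <= - ln t - rho ln u.

   Lower bound: all orderings of m1, m2, m3 blocks of the three kinds give distinct resistant
   configurations, so J is at least a multinomial coefficient; with block frequencies p1, p2, p3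
   this yields S(kappa/nu) >= H(p)/nu, where H is the entropy and nu, kappa are the mean length
   and mean number of houses of a block.

   At a saddle point p1 = t^3 u^2, p2 = t^5 u^3, p3 = t^4 u^2 with p1 + p2 + p3 = 1 both bounds
   equal - ln t - rho ln u. For 1/2 < rho < 2/3 the saddle point of density rho is
   t = (2-3rho)^2 / ((1-rho)(2rho-1)), u = (2rho-1)^2 (1-rho) / (2-3rho)^3. *)

section \<open>Sums, factorials and limits\<close>

lemma sum_Un_le:
  fixes f :: "'a \<Rightarrow> 'b::ordered_comm_monoid_add"
  assumes "finite A" "finite B" "\<And>x. x \<in> A \<inter> B \<Longrightarrow> 0 \<le> f x"
  shows "sum f (A \<union> B) \<le> sum f A + sum f B"
  using sum.union_inter[OF assms(1,2), of f] sum_nonneg[of "A \<inter> B" f] assms(3)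
  by (metis add_increasing2 order_refl)

lemma bounded_if_renewal_le:
  fixes S :: "nat \<Rightarrow> real" and w :: "'a::finite \<Rightarrow> real" and l :: "'a \<Rightarrow> nat"
  assumes w: "\<And>a. 0 \<le> w a" and l: "\<And>a. 0 < l a" and sum_w: "(\<Sum>a\<in>UNIV. w a) \<le> 1"
    and renewal: "\<And>n. m < n \<Longrightarrow> S n \<le> (\<Sum>a\<in>UNIV. w a * S (n - l a))"
  shows "\<exists>B. \<forall>n. S n \<le> B"
proof -
  define B where "B = max 0 (Max (S ` {..m}))"
  have "S n \<le> B" for n
  proof (induction n rule: less_induct)
    case (less n)
    show ?case
    proof (cases "n \<le> m")
      case True
      then show ?thesis
        unfolding B_def by (intro max.coboundedI2 Max_ge) auto
    next
      case False
      then have "S n \<le> (\<Sum>a\<in>UNIV. w a * S (n - l a))"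
        using renewal by simp
      also have "\<dots> \<le> (\<Sum>a\<in>UNIV. w a * B)"
        using False l by (intro sum_mono mult_left_mono w less) (auto simp: diff_less)
      also have "\<dots> = (\<Sum>a\<in>UNIV. w a) * B"
        by (simp add: sum_distrib_right)
      also have "\<dots> \<le> B"
        using sum_w by (intro mult_left_le_one_le) (auto simp: B_def intro: sum_nonneg w)
      finally show ?thesis .
    qed
  qed
  then show ?thesis by blast
qed

lemma pow_le_fact_mult_exp: "real m ^ m \<le> fact m * exp (real m)"
proof -
  have exp_sums: "(\<lambda>n. real m ^ n / fact n) sums exp (real m)"
    using exp_converges[of "real m"] by (simp add: divide_inverse_commute)
  have "real m ^ m / fact m = (\<Sum>n\<in>{m}. real m ^ n / fact n)"
    by simp
  also have "\<dots> \<le> (\<Sum>n. real m ^ n / fact n)"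
    by (rule sum_le_suminf[OF sums_summable[OF exp_sums]]) auto
  also have "\<dots> = exp (real m)"
    using exp_sums by (rule sums_unique[symmetric])
  finally show ?thesis
    by (simp add: divide_le_eq mult.commute)
qed

lemma exp_one_le_pow: "exp 1 \<le> (1 + 1 / real n) ^ (n + 1)" if "n > 0"
proof -
  have "real n / (real n + 1) \<le> exp (- 1 / (real n + 1))"
    using exp_ge_add_one_self[of "- 1 / (real n + 1)"] by (simp add: field_simps)
  then have "(real n / (real n + 1)) ^ (n + 1) \<le> exp (- 1 / (real n + 1)) ^ (n + 1)"
    by (intro power_mono) auto
  also have "\<dots> = exp (real (n + 1) * (- 1 / (real n + 1)))"
    by (rule exp_of_nat_mult[symmetric])
  also have "\<dots> = exp (- 1)"
    by (simp add: add_pos_nonneg)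
  finally have "inverse (exp (- 1)) \<le> inverse ((real n / (real n + 1)) ^ (n + 1))"
    using that by (intro le_imp_inverse_le) auto
  also have "inverse ((real n / (real n + 1)) ^ (n + 1)) = (1 + 1 / real n) ^ (n + 1)"
    using that by (simp add: power_inverse field_simps)
  finally show ?thesis
    by (simp add: exp_minus)
qed

lemma fact_mult_exp_le: "fact n * exp (real n) \<le> (real n + 1) ^ (n + 1)"
proof (induction n)
  case (Suc n)
  have "fact (Suc n) * exp (real (Suc n)) = (real n + 1) * (fact n * exp (real n)) * exp 1"
    by (simp add: exp_add algebra_simps)
  also have "\<dots> \<le> (real n + 1) * (real n + 1) ^ (n + 1) * (1 + 1 / (real n + 1)) ^ (n + 2)"
    using exp_one_le_pow[of "Suc n"] by (intro mult_mono mult_left_mono Suc.IH) (auto simp: add.commute)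
  also have "\<dots> = ((real n + 1) * (1 + 1 / (real n + 1))) ^ (n + 2)"
    by (simp add: power_mult_distrib)
  also have "\<dots> = (real (Suc n) + 1) ^ (Suc n + 1)"
  proof -
    have "(real n + 1) * (1 + 1 / (real n + 1)) = real (Suc n) + 1"
      by (simp add: field_simps)
    then show ?thesis
      by (simp only: Suc_eq_plus1 add.assoc one_add_one)
  qed
  finally show ?case .
qed simp

lemma ln_fact_ge: "real n * ln (real n) - real n \<le> ln (fact n)"
proof (cases "n = 0")
  case False
  have "ln (real n ^ n) \<le> ln (fact n * exp (real n))"
    using pow_le_fact_mult_exp[of n] False by (subst ln_le_cancel_iff) auto
  then show ?thesis
    by (simp add: ln_realpow ln_mult)
qed simp

lemma ln_fact_le: "ln (fact n) \<le> (real n + 1) * ln (real n + 1) - real n"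
proof -
  have "ln (fact n) + real n = ln (fact n * exp (real n))"
    by (simp add: ln_mult)
  also have "\<dots> \<le> ln ((real n + 1) ^ (n + 1))"
    using fact_mult_exp_le[of n] by (subst ln_le_cancel_iff) auto
  also have "\<dots> = (real n + 1) * ln (real n + 1)"
    by (subst ln_realpow) auto
  finally show ?thesis
    by linarith
qed

lemma tendsto_nat_floor_mult_div:
  assumes "0 \<le> p"
  shows "((\<lambda>i. real (nat \<lfloor>real i * p\<rfloor>) / real i) \<longlongrightarrow> p) sequentially"
proof (rule tendsto_sandwich[of "\<lambda>i. p - 1 / real i" _ _ "\<lambda>i. p"])
  have floor_eq: "real (nat \<lfloor>real i * p\<rfloor>) = real_of_int \<lfloor>real i * p\<rfloor>" for i
    using assms by simp
  show "eventually (\<lambda>i. p - 1 / real i \<le> real (nat \<lfloor>real i * p\<rfloor>) / real i) sequentially"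
    using eventually_gt_at_top[of 0]
  proof eventually_elim
    case (elim i)
    have "real i * p - 1 \<le> real (nat \<lfloor>real i * p\<rfloor>)"
      unfolding floor_eq by linarith
    then have "(real i * p - 1) / real i \<le> real (nat \<lfloor>real i * p\<rfloor>) / real i"
      by (intro divide_right_mono) auto
    moreover have "p - 1 / real i = (real i * p - 1) / real i"
      using elim by (simp add: field_simps)
    ultimately show ?case
      by simp
  qed
  show "eventually (\<lambda>i. real (nat \<lfloor>real i * p\<rfloor>) / real i \<le> p) sequentially"
    using eventually_gt_at_top[of 0]
  proof eventually_elim
    case (elim i)
    have "real (nat \<lfloor>real i * p\<rfloor>) \<le> real i * p"
      unfolding floor_eq by linarith
    then show ?case
      using elim by (simp add: field_simps)
  qed
  show "((\<lambda>i. p - 1 / real i) \<longlongrightarrow> p) sequentially"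
    using tendsto_diff[OF tendsto_const lim_1_over_n, of p] by simp
qed simp

lemma tendsto_xlnx_div:
  fixes a :: "nat \<Rightarrow> real"
  assumes a: "((\<lambda>i. a i / real i) \<longlongrightarrow> \<alpha>) sequentially" and "0 < \<alpha>"
  shows "((\<lambda>i. (a i * ln (a i) - a i * ln (real i)) / real i) \<longlongrightarrow> \<alpha> * ln \<alpha>) sequentially"
proof -
  have "((\<lambda>i. a i / real i * ln (a i / real i)) \<longlongrightarrow> \<alpha> * ln \<alpha>) sequentially"
    using assms by (intro tendsto_mult tendsto_ln) auto
  moreover have "eventually (\<lambda>i. a i / real i * ln (a i / real i) = (a i * ln (a i) - a i * ln (real i)) / real i) sequentially"
    using order_tendstoD(1)[OF a \<open>0 < \<alpha>\<close>] eventually_gt_at_top[of 0]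
  proof eventually_elim
    case (elim i)
    then have "0 < a i"
      by (simp add: zero_less_divide_iff)
    then show ?case
      using elim by (simp add: ln_div diff_divide_distrib right_diff_distrib)
  qed
  ultimately show ?thesis
    by (rule Lim_transform_eventually)
qed

lemma entropy_bound_tendsto:
  fixes m1 m2 m3 :: "nat \<Rightarrow> nat"
  assumes m1: "((\<lambda>i. real (m1 i) / real i) \<longlongrightarrow> p1) sequentially"
    and m2: "((\<lambda>i. real (m2 i) / real i) \<longlongrightarrow> p2) sequentially"
    and m3: "((\<lambda>i. real (m3 i) / real i) \<longlongrightarrow> p3) sequentially"
    and p: "0 < p1" "0 < p2" "0 < p3" "p1 + p2 + p3 = 1"
  shows "((\<lambda>i. (real (m1 i + m2 i + m3 i) * ln (real (m1 i + m2 i + m3 i))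
      - ((real (m1 i) + 1) * ln (real (m1 i) + 1) + (real (m2 i) + 1) * ln (real (m2 i) + 1)
         + (real (m3 i) + 1) * ln (real (m3 i) + 1))) / real i)
    \<longlongrightarrow> - (p1 * ln p1 + p2 * ln p2 + p3 * ln p3)) sequentially"
proof -
  define f where "f a i = (a * ln a - a * ln (real i)) / real i" for a :: real and i :: nat
  have succ: "((\<lambda>i. (real (m i) + 1) / real i) \<longlongrightarrow> p) sequentially"
    if "((\<lambda>i. real (m i) / real i) \<longlongrightarrow> p) sequentially" for m p
    using tendsto_add[OF that lim_1_over_n] by (simp add: add_divide_distrib)
  have "((\<lambda>i. real (m1 i + m2 i + m3 i) / real i) \<longlongrightarrow> p1 + p2 + p3) sequentially"
    using tendsto_add[OF tendsto_add[OF m1 m2] m3] by (simp add: add_divide_distrib)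
  then have "((\<lambda>i. f (real (m1 i + m2 i + m3 i)) i
      - (f (real (m1 i) + 1) i + f (real (m2 i) + 1) i + f (real (m3 i) + 1) i) - 3 * (ln (real i) / real i))
    \<longlongrightarrow> 1 * ln 1 - (p1 * ln p1 + p2 * ln p2 + p3 * ln p3) - 3 * 0) sequentially"
    unfolding f_def using p
    by (intro tendsto_diff tendsto_add tendsto_mult tendsto_const lim_ln_over_n tendsto_xlnx_div succ m1 m2 m3) auto
  \<comment> \<open>The terms in \<open>ln i\<close> cancel because \<open>(m1 + m2 + m3) - ((m1 + 1) + (m2 + 1) + (m3 + 1)) = -3\<close>.\<close>
  moreover have "f (real (m1 i + m2 i + m3 i)) i
      - (f (real (m1 i) + 1) i + f (real (m2 i) + 1) i + f (real (m3 i) + 1) i) - 3 * (ln (real i) / real i)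
    = (real (m1 i + m2 i + m3 i) * ln (real (m1 i + m2 i + m3 i))
      - ((real (m1 i) + 1) * ln (real (m1 i) + 1) + (real (m2 i) + 1) * ln (real (m2 i) + 1)
         + (real (m3 i) + 1) * ln (real (m3 i) + 1))) / real i" for i
    unfolding f_def by (simp add: diff_divide_distrib add_divide_distrib algebra_simps)
  ultimately show ?thesis
    by simp
qed

section \<open>Resistance as a condition on windows of five lots\<close>

(* Lots k-2, ..., k+2: the house on lot k is not blocked, and a house built on an empty lot k
   would block one of its neighbours. *)
definition resistant_window :: "bool \<Rightarrow> bool \<Rightarrow> bool \<Rightarrow> bool \<Rightarrow> bool \<Rightarrow> bool" where
  "resistant_window x1 x2 x3 x4 x5 \<longleftrightarrow> \<not> (x2 \<and> x3 \<and> x4) \<and> (\<not> x3 \<longrightarrow> x1 \<and> x2 \<or> x4 \<and> x5)"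

fun windows_ok :: "bool list \<Rightarrow> bool" where
  "windows_ok (x1 # x2 # x3 # x4 # x5 # r) \<longleftrightarrow>
     resistant_window x1 x2 x3 x4 x5 \<and> windows_ok (x2 # x3 # x4 # x5 # r)"
| "windows_ok _ \<longleftrightarrow> True"

lemma windows_ok_iff_nth:
  "windows_ok l \<longleftrightarrow>
     (\<forall>i. i + 5 \<le> length l \<longrightarrow> resistant_window (l!i) (l!(i+1)) (l!(i+2)) (l!(i+3)) (l!(i+4)))"
proof (induction l rule: windows_ok.induct)
  case (1 x1 x2 x3 x4 x5 r)
  have all_nat_split: "(\<forall>i. P i) \<longleftrightarrow> P 0 \<and> (\<forall>i. P (Suc i))" for P
    by (metis not0_implies_Suc)
  show ?case
    by (subst all_nat_split) (simp add: 1 numeral_eq_Suc)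
qed auto

lemma windows_ok_padded_iff:
  "windows_ok (False # False # c @ [False, False]) \<longleftrightarrow>
     (\<forall>k\<in>{1..length c}. resistant_window (occ c (k-2)) (occ c (k-1)) (occ c k) (occ c (k+1)) (occ c (k+2)))"
  (is "_ \<longleftrightarrow> ?local")
proof -
  \<comment> \<open>For \<open>k = 1\<close> the lot \<open>k - 2\<close> truncates to 0, which is unoccupied like every lot outside \<open>1..length c\<close>.\<close>
  define p where "p = False # False # c @ [False, False]"
  have len: "length p = length c + 4"
    by (simp add: p_def)
  have nth: "p ! j = occ c (j - 1)" if "j < length c + 4" for j
    using that unfolding p_def occ_def by (cases j; cases "j - 1"; auto simp: nth_append nth_Cons')
  have "windows_ok p \<longleftrightarrow>
     (\<forall>i<length c. resistant_window (occ c (i-1)) (occ c i) (occ c (i+1)) (occ c (i+2)) (occ c (i+3)))"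
    unfolding windows_ok_iff_nth len by (simp add: nth Suc_le_eq add.commute)
  also have "\<dots> \<longleftrightarrow> ?local"
    unfolding image_Suc_lessThan[symmetric] by (auto simp: numeral_eq_Suc)
  finally show ?thesis
    by (simp add: p_def)
qed

lemma occ_list_update: "k \<in> {1..length c} \<Longrightarrow> occ (c[k-1 := True]) j \<longleftrightarrow> j = k \<or> occ c j"
  by (auto simp: occ_def nth_list_update)

lemma blocked_iff: "blocked c k \<longleftrightarrow> 2 \<le> k \<and> occ c (k-1) \<and> occ c k \<and> occ c (k+1)"
  by (auto simp: blocked_def occ_def)

lemma permissible_iff: "permissible c \<longleftrightarrow> (\<forall>k\<in>{1..length c}. \<not> (occ c (k-1) \<and> occ c k \<and> occ c (k+1)))"
  unfolding permissible_def blocked_iff by (auto simp: occ_def)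

lemma blocked_after_insertion_iff:
  assumes "permissible c" and k: "k \<in> {1..length c}" and "\<not> occ c k"
  shows "(\<exists>l. l \<noteq> k \<and> blocked (c[k-1 := True]) l) \<longleftrightarrow>
         occ c (k-2) \<and> occ c (k-1) \<or> occ c (k+1) \<and> occ c (k+2)"
proof
  assume "\<exists>l. l \<noteq> k \<and> blocked (c[k-1 := True]) l"
  then obtain l where "l \<noteq> k" "2 \<le> l" "l - 1 = k \<or> occ c (l-1)" "occ c l" "l + 1 = k \<or> occ c (l+1)"
    unfolding blocked_iff occ_list_update[OF k] by blast
  moreover have "\<not> (occ c (l-1) \<and> occ c l \<and> occ c (l+1))"
    using assms(1) \<open>occ c l\<close> unfolding permissible_iff by (auto simp: occ_def)
  ultimately consider "l = k + 1" | "l + 1 = k"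
    by fastforce
  then show "occ c (k-2) \<and> occ c (k-1) \<or> occ c (k+1) \<and> occ c (k+2)"
  proof cases
    case 1
    then show ?thesis using \<open>occ c l\<close> \<open>l + 1 = k \<or> occ c (l+1)\<close> by auto
  next
    case 2
    then have "k - 2 = l - 1" "k - 1 = l" by auto
    then show ?thesis using \<open>occ c l\<close> \<open>l - 1 = k \<or> occ c (l-1)\<close> \<open>l + 1 = k\<close> by auto
  qed
next
  assume "occ c (k-2) \<and> occ c (k-1) \<or> occ c (k+1) \<and> occ c (k+2)"
  then have "blocked (c[k-1 := True]) (k-1) \<or> blocked (c[k-1 := True]) (k+1)"
    using k unfolding blocked_iff occ_list_update[OF k] by (auto simp: occ_def numeral_eq_Suc)
  moreover have "k - 1 \<noteq> k" using k by auto
  ultimately show "\<exists>l. l \<noteq> k \<and> blocked (c[k-1 := True]) l" by (metis n_not_Suc_n Suc_eq_plus1)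
qed

lemma resistant_iff_permissible:
  "resistant c \<longleftrightarrow> permissible c \<and>
     (\<forall>k\<in>{1..length c}. \<not> occ c k \<longrightarrow> (\<exists>l. l \<noteq> k \<and> blocked (c[k-1 := True]) l))"
  unfolding resistant_def maximal_conf_def permissible_def by blast

lemma resistant_iff_windows: "resistant c \<longleftrightarrow> windows_ok (False # False # c @ [False, False])"
proof -
  have "resistant c \<longleftrightarrow> permissible c \<and> (\<forall>k\<in>{1..length c}. \<not> occ c k \<longrightarrow>
          occ c (k-2) \<and> occ c (k-1) \<or> occ c (k+1) \<and> occ c (k+2))"
    unfolding resistant_iff_permissible using blocked_after_insertion_iff by blast
  then show ?thesis
    unfolding windows_ok_padded_iff resistant_window_def permissible_iff by blast
qed

section \<open>Decomposition into blocks\<close>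

datatype block = B110 | B11010 | B1100

fun block_word :: "block \<Rightarrow> bool list" where
  "block_word B110 = [True, True, False]"
| "block_word B11010 = [True, True, False, True, False]"
| "block_word B1100 = [True, True, False, False]"

lemma UNIV_block: "(UNIV :: block set) = {B110, B11010, B1100}"
  using block.exhaust by blast

instance block :: finite
  by standard (simp add: UNIV_block)

definition anchored :: "bool list \<Rightarrow> bool" where
  "anchored d \<longleftrightarrow> (\<exists>r. d = True # True # r) \<and> resistant d"

lemma anchored_iff_windows_ok:
  "anchored (True # True # r) \<longleftrightarrow> windows_ok (False # False # True # True # r @ [False, False])"
  by (simp add: anchored_def resistant_iff_windows)

lemma windows_ok_ConsD: "windows_ok (x # l) \<Longrightarrow> windows_ok l"
  by (cases "x # l" rule: windows_ok.cases) auto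

lemma windows_ok_shift:
  "windows_ok (True # False # True # True # r) \<longleftrightarrow> windows_ok (False # False # True # True # r)"
  by (cases r) (auto simp: resistant_window_def)

lemma anchored_block_append: "anchored d \<Longrightarrow> anchored (block_word b @ d)"
  unfolding anchored_def resistant_iff_windows
  by (cases b) (auto simp: windows_ok_shift resistant_window_def)

lemma bool_list_cases:
  obtains "r = []" | r' where "r = True # r'" | r' where "r = False # r'"
  by (metis list.exhaust)

lemma anchored_cases:
  assumes "anchored d"
  obtains "d \<in> {[True, True], [True, True, False], [True, True, False, True]}"
  | b d' where "anchored d'" "d = block_word b @ d'"
proof -
  obtain r where d: "d = True # True # r" and w: "windows_ok (False # False # True # True # r @ [False, False])"
    using assms unfolding anchored_def resistant_iff_windows by auto
  consider "r \<in> {[], [False], [False, True]}"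
    | r' where "r = False # True # True # r'"
    | r' where "r = False # True # False # True # True # r'"
    | r' where "r = False # False # True # True # r'"
    using w
    by (cases r rule: bool_list_cases; cases "tl r" rule: bool_list_cases;
        cases "tl (tl r)" rule: bool_list_cases; cases "tl (tl (tl r))" rule: bool_list_cases;
        cases "tl (tl (tl (tl r)))" rule: bool_list_cases)
      (simp_all add: resistant_window_def)
  then show thesis
  proof cases
    case 1
    then show thesis using that(1) d by auto
  next
    case 2
    then show thesis
      using that(2)[of "True # True # r'" B110] w d
      by (auto simp: anchored_iff_windows_ok windows_ok_shift dest!: windows_ok_ConsD)
  next
    case 3
    then show thesis
      using that(2)[of "True # True # r'" B11010] w d
      by (auto simp: anchored_iff_windows_ok windows_ok_shift dest!: windows_ok_ConsD)
  next
    case 4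
    then show thesis
      using that(2)[of "True # True # r'" B1100] w d
      by (auto simp: anchored_iff_windows_ok windows_ok_shift dest!: windows_ok_ConsD)
  qed
qed

lemma resistant_cases:
  assumes "resistant c"
  obtains "c \<in> {[], [True]}" | p d where "p \<in> {[], [False], [True, False]}" "anchored d" "c = p @ d"
proof -
  have w: "windows_ok (False # False # c @ [False, False])"
    using assms resistant_iff_windows by blast
  consider "c \<in> {[], [True]}"
    | d where "c = True # True # d"
    | d where "c = False # True # True # d"
    | d where "c = True # False # True # True # d"
    using w
    by (cases c rule: bool_list_cases; cases "tl c" rule: bool_list_cases;
        cases "tl (tl c)" rule: bool_list_cases; cases "tl (tl (tl c))" rule: bool_list_cases)
      (simp_all add: resistant_window_def)
  then show thesis
  proof cases
    case 1
    then show thesis using that(1) by auto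
  next
    case 2
    then show thesis
      using that(2)[of "[]" "True # True # d"] assms by (simp add: anchored_def)
  next
    case 3
    then show thesis
      using that(2)[of "[False]" "True # True # d"] w
      by (auto simp: anchored_iff_windows_ok dest!: windows_ok_ConsD)
  next
    case 4
    then show thesis
      using that(2)[of "[True, False]" "True # True # d"] w
      by (auto simp: anchored_iff_windows_ok windows_ok_shift dest!: windows_ok_ConsD)
  qed
qed

definition blocks_word :: "block list \<Rightarrow> bool list" where
  "blocks_word bs = concat (map block_word bs) @ [True, True]"

lemma blocks_word_Cons: "blocks_word (b # bs) = block_word b @ blocks_word bs"
  by (simp add: blocks_word_def)

lemma anchored_blocks_word: "anchored (blocks_word bs)"
proof (induction bs)
  case Nil
  show ?case
    by (simp add: blocks_word_def anchored_iff_windows_ok resistant_window_def)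
next
  case (Cons b bs)
  then show ?case
    by (simp add: blocks_word_Cons anchored_block_append)
qed

lemma length_blocks_word: "length (blocks_word bs) = (\<Sum>b\<leftarrow>bs. length (block_word b)) + 2"
  by (simp add: blocks_word_def length_concat comp_def)

lemma houses_blocks_word: "houses (blocks_word bs) = (\<Sum>b\<leftarrow>bs. houses (block_word b)) + 2"
  by (induction bs) (auto simp: blocks_word_def houses_def)

lemma length_blocks_word_Cons: "2 < length (blocks_word (b # bs))"
  by (cases b) (simp_all add: blocks_word_def)

lemma block_word_append_cancel:
  "block_word b @ True # True # r = block_word b' @ True # True # r' \<Longrightarrow> b = b' \<and> r = r'"
  by (cases b; cases b') simp_all

lemma inj_blocks_word: "inj blocks_word"
proof (rule injI)
  fix bs bs' :: "block list"
  assume "blocks_word bs = blocks_word bs'"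
  then show "bs = bs'"
  proof (induction bs arbitrary: bs')
    case Nil
    show ?case
    proof (cases bs')
      case (Cons b bs'')
      then have "2 < length (blocks_word [])"
        using Nil.prems length_blocks_word_Cons by simp
      then show ?thesis
        by (simp add: blocks_word_def)
    qed simp
  next
    case (Cons b bs)
    obtain b' bs'' where bs': "bs' = b' # bs''"
    proof (cases bs')
      case Nil
      then have "2 < length (blocks_word [])"
        using Cons.prems length_blocks_word_Cons[of b bs] by simp
      then show ?thesis
        by (simp add: blocks_word_def)
    qed
    obtain r r' where r: "blocks_word bs = True # True # r" and r': "blocks_word bs'' = True # True # r'"
      using anchored_blocks_word unfolding anchored_def by blast
    have "block_word b @ True # True # r = block_word b' @ True # True # r'"
      using Cons.prems unfolding bs' blocks_word_Cons r r' .
    then have "b = b' \<and> r = r'"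
      by (rule block_word_append_cancel)
    then show ?case
      using Cons.IH[of bs''] bs' r r' by simp
  qed
qed

section \<open>Upper bound\<close>

lemma finite_bool_lists_length: "finite {xs :: bool list. length xs = n \<and> P xs}"
  using finite_lists_length_eq[of "UNIV :: bool set" n] by (rule rev_finite_subset) auto

definition weight :: "real \<Rightarrow> real \<Rightarrow> bool list \<Rightarrow> real" where
  "weight t u c = t ^ length c * u ^ houses c"

lemma weight_append: "weight t u (p @ d) = weight t u p * weight t u d"
  by (simp add: weight_def houses_def power_add)

lemma weight_nonneg: "0 \<le> t \<Longrightarrow> 0 \<le> u \<Longrightarrow> 0 \<le> weight t u c"
  by (simp add: weight_def)

lemma sum_weight_block_word:
  "(\<Sum>b\<in>UNIV. weight t u (block_word b)) = t^3 * u^2 + t^5 * u^3 + t^4 * u^2"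
  by (simp add: UNIV_block weight_def houses_def numeral_eq_Suc)

lemma anchored_weight_bounded:
  assumes t: "0 < t" and u: "0 < u" and blocks: "(\<Sum>b\<in>UNIV. weight t u (block_word b)) \<le> 1"
  shows "\<exists>B. \<forall>n. (\<Sum>d | length d = n \<and> anchored d. weight t u d) \<le> B"
proof (rule bounded_if_renewal_le[where m = 4 and l = "\<lambda>b. length (block_word b)"])
  fix n :: nat
  assume "4 < n"
  let ?A = "\<lambda>m. {d. length d = m \<and> anchored d}"
  let ?pairs = "SIGMA b:UNIV. ?A (n - length (block_word b))"
  have "?A n \<subseteq> (\<lambda>(b, d). block_word b @ d) ` ?pairs"
  proof
    fix d assume d: "d \<in> ?A n"
    then have "anchored d" by simp
    then show "d \<in> (\<lambda>(b, d). block_word b @ d) ` ?pairs"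
    proof (cases rule: anchored_cases)
      case 1
      then show ?thesis using d \<open>4 < n\<close> by auto
    next
      case (2 b d')
      then have "(b, d') \<in> ?pairs" using d by auto
      then show ?thesis using 2 by (auto intro: rev_image_eqI)
    qed
  qed
  then have "(\<Sum>d\<in>?A n. weight t u d) \<le> (\<Sum>d\<in>(\<lambda>(b, d). block_word b @ d) ` ?pairs. weight t u d)"
    using t u by (intro sum_mono2 finite_imageI finite_SigmaI finite_bool_lists_length weight_nonneg) auto
  also have "\<dots> \<le> (\<Sum>(b, d)\<in>?pairs. weight t u (block_word b @ d))"
  proof -
    have "finite ?pairs"
      by (intro finite_SigmaI finite_bool_lists_length) simp
    then show ?thesis
      using sum_image_le[of ?pairs "weight t u" "\<lambda>(b, d). block_word b @ d"] t u
      by (simp add: weight_nonneg comp_def case_prod_beta)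
  qed
  also have "\<dots> = (\<Sum>b\<in>UNIV. \<Sum>d\<in>?A (n - length (block_word b)). weight t u (block_word b @ d))"
    by (rule sum.Sigma[symmetric]) (simp_all add: finite_bool_lists_length)
  also have "\<dots> = (\<Sum>b\<in>UNIV. weight t u (block_word b) * (\<Sum>d\<in>?A (n - length (block_word b)). weight t u d))"
    by (simp add: weight_append sum_distrib_left)
  finally show "(\<Sum>d\<in>?A n. weight t u d) \<le>
      (\<Sum>b\<in>UNIV. weight t u (block_word b) * (\<Sum>d\<in>?A (n - length (block_word b)). weight t u d))" .
next
  fix b
  show "0 < length (block_word b)"
    by (cases b) simp_all
qed (use t u blocks in \<open>simp_all add: weight_nonneg\<close>)

lemma resistant_weight_bounded:
  assumes t: "0 < t" and u: "0 < u" and blocks: "(\<Sum>b\<in>UNIV. weight t u (block_word b)) \<le> 1"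
  shows "\<exists>C. \<forall>n. (\<Sum>c | length c = n \<and> resistant c. weight t u c) \<le> C"
proof -
  obtain B where B: "\<And>m. (\<Sum>d | length d = m \<and> anchored d. weight t u d) \<le> B"
    using anchored_weight_bounded[OF assms] by blast
  let ?P = "{[], [False], [True, False]}"
  define C where "C = (\<Sum>c\<in>{[], [True]}. weight t u c) + (\<Sum>p\<in>?P. weight t u p * B)"
  have "(\<Sum>c | length c = n \<and> resistant c. weight t u c) \<le> C" for n
  proof -
    let ?A = "\<lambda>m. {d. length d = m \<and> anchored d}"
    let ?pairs = "SIGMA p:?P. ?A (n - length p)"
    have fin: "finite ?pairs"
      by (intro finite_SigmaI finite_bool_lists_length) simp
    have "{c. length c = n \<and> resistant c} \<subseteq> {[], [True]} \<union> (\<lambda>(p, d). p @ d) ` ?pairs"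
    proof
      fix c assume c: "c \<in> {c. length c = n \<and> resistant c}"
      then have "resistant c" by simp
      then show "c \<in> {[], [True]} \<union> (\<lambda>(p, d). p @ d) ` ?pairs"
      proof (cases rule: resistant_cases)
        case (2 p d)
        then have "(p, d) \<in> ?pairs" using c by auto
        then show ?thesis using 2 by (auto intro: rev_image_eqI)
      qed blast
    qed
    then have "(\<Sum>c | length c = n \<and> resistant c. weight t u c)
        \<le> (\<Sum>c\<in>{[], [True]}. weight t u c) + (\<Sum>c\<in>(\<lambda>(p, d). p @ d) ` ?pairs. weight t u c)"
      using t u fin
      by (intro order.trans[OF sum_mono2 sum_Un_le]) (auto intro: weight_nonneg)
    also have "(\<Sum>c\<in>(\<lambda>(p, d). p @ d) ` ?pairs. weight t u c) \<le> (\<Sum>(p, d)\<in>?pairs. weight t u (p @ d))"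
      using sum_image_le[OF fin, of "weight t u" "\<lambda>(p, d). p @ d"] t u
      by (simp add: weight_nonneg comp_def case_prod_beta)
    also have "\<dots> = (\<Sum>p\<in>?P. \<Sum>d\<in>?A (n - length p). weight t u (p @ d))"
      by (rule sum.Sigma[symmetric]) (simp_all add: finite_bool_lists_length)
    also have "\<dots> = (\<Sum>p\<in>?P. weight t u p * (\<Sum>d\<in>?A (n - length p). weight t u d))"
      by (simp add: weight_append sum_distrib_left)
    also have "\<dots> \<le> (\<Sum>p\<in>?P. weight t u p * B)"
      using t u by (intro sum_mono mult_left_mono B weight_nonneg) auto
    finally show ?thesis
      unfolding C_def by simp
  qed
  then show ?thesis by blast
qed

lemma card_resistant_weight_bounded:
  assumes t: "0 < t" and u: "0 < u" and blocks: "t^3 * u^2 + t^5 * u^3 + t^4 * u^2 \<le> 1"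
  shows "\<exists>C>0. \<forall>n k. real (card {c. length c = n \<and> houses c = k \<and> resistant c}) * (t^n * u^k) \<le> C"
proof -
  obtain C where C: "\<And>n. (\<Sum>c | length c = n \<and> resistant c. weight t u c) \<le> C"
    using resistant_weight_bounded[OF t u] blocks unfolding sum_weight_block_word by blast
  have "real (card {c. length c = n \<and> houses c = k \<and> resistant c}) * (t^n * u^k) \<le> C" for n k
  proof -
    have "real (card {c. length c = n \<and> houses c = k \<and> resistant c}) * (t^n * u^k)
        = (\<Sum>c | length c = n \<and> houses c = k \<and> resistant c. weight t u c)"
      by (simp add: weight_def)
    also have "\<dots> \<le> (\<Sum>c | length c = n \<and> resistant c. weight t u c)"
      using t u by (intro sum_mono2 finite_bool_lists_length weight_nonneg) auto
    finally show ?thesis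
      using C[of n] by simp
  qed
  then show ?thesis
    by (meson less_max_iff_disj max.coboundedI1 zero_less_one)
qed

lemma ln_J_A_div_le:
  assumes t: "0 < t" and u: "0 < u" and "0 < C"
    and C: "real (card {c. length c = n \<and> houses c = k \<and> resistant c}) * (t^n * u^k) \<le> C"
    and "0 < n"
  shows "ln (real (J_A k n)) / real n \<le> max 0 (ln C / real n - ln t - real k / real n * ln u)"
proof (cases "card {c. length c = n \<and> houses c = k \<and> resistant c} = 0")
  case True
  then show ?thesis by (simp add: J_A_def)
next
  case False
  let ?m = "card {c. length c = n \<and> houses c = k \<and> resistant c}"
  have "ln (real ?m) + real n * ln t + real k * ln u = ln (real ?m * (t^n * u^k))"
    using False t u by (simp add: ln_mult ln_realpow)
  also have "\<dots> \<le> ln C"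
    using C \<open>0 < C\<close> False t u by (subst ln_le_cancel_iff) auto
  finally have "ln (real ?m) / real n \<le> (ln C - real n * ln t - real k * ln u) / real n"
    using \<open>0 < n\<close> by (intro divide_right_mono) auto
  also have "\<dots> = ln C / real n - ln t - real k / real n * ln u"
    using \<open>0 < n\<close> by (simp add: field_simps)
  finally show ?thesis
    using False by (simp add: J_A_def)
qed

lemma limsup_ln_J_A_le:
  fixes K N :: "nat \<Rightarrow> nat"
  assumes t: "0 < t" and u: "0 < u" and blocks: "t^3 * u^2 + t^5 * u^3 + t^4 * u^2 \<le> 1"
    and N: "filterlim N at_top sequentially"
    and KN: "((\<lambda>i. real (K i) / real (N i)) \<longlongrightarrow> \<rho>) sequentially"
  shows "limsup (\<lambda>i. ereal (ln (real (J_A (K i) (N i))) / real (N i))) \<le> ereal (max 0 (- ln t - \<rho> * ln u))"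
proof -
  obtain C where "C > 0"
    and C: "\<And>n k. real (card {c. length c = n \<and> houses c = k \<and> resistant c}) * (t^n * u^k) \<le> C"
    using card_resistant_weight_bounded[OF t u blocks] by blast
  define Y where "Y i = max 0 (ln C / real (N i) - ln t - real (K i) / real (N i) * ln u)" for i
  have "eventually (\<lambda>i. N i > 0) sequentially"
    using eventually_compose_filterlim[OF eventually_gt_at_top N] .
  then have "eventually (\<lambda>i. ereal (ln (real (J_A (K i) (N i))) / real (N i)) \<le> ereal (Y i)) sequentially"
    by eventually_elim (unfold ereal_less_eq(3) Y_def, rule ln_J_A_div_le[OF t u \<open>0 < C\<close> C])
  then have "limsup (\<lambda>i. ereal (ln (real (J_A (K i) (N i))) / real (N i))) \<le> limsup (\<lambda>i. ereal (Y i))"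
    by (rule Limsup_mono)
  also have "limsup (\<lambda>i. ereal (Y i)) = ereal (max 0 (- ln t - \<rho> * ln u))"
  proof (intro lim_imp_Limsup trivial_limit_sequentially)
    have "filterlim (\<lambda>i. real (N i)) at_infinity sequentially"
      by (intro filterlim_at_top_imp_at_infinity filterlim_compose[OF filterlim_real_sequentially N])
    then have "(Y \<longlongrightarrow> max 0 (0 - ln t - \<rho> * ln u)) sequentially"
      unfolding Y_def
      by (intro tendsto_max tendsto_const tendsto_diff tendsto_mult KN tendsto_divide_0[OF tendsto_const])
    then show "((\<lambda>i. ereal (Y i)) \<longlongrightarrow> ereal (max 0 (- ln t - \<rho> * ln u))) sequentially"
      by (simp only: lim_ereal diff_0)
  qed
  finally show ?thesis .
qed

lemma S_A_le:
  assumes "0 < t" and "0 < u" and "t^3 * u^2 + t^5 * u^3 + t^4 * u^2 \<le> 1"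
  shows "S_A \<rho> \<le> ereal (max 0 (- ln t - \<rho> * ln u))"
  unfolding S_A_def using limsup_ln_J_A_le[OF assms] by (auto intro: SUP_least)

section \<open>Lower bound\<close>

definition block_mset :: "nat \<Rightarrow> nat \<Rightarrow> nat \<Rightarrow> block multiset" where
  "block_mset m1 m2 m3 = replicate_mset m1 B110 + replicate_mset m2 B11010 + replicate_mset m3 B1100"

lemma card_permutations_block_mset:
  "card (permutations_of_multiset (block_mset m1 m2 m3)) * (fact m1 * fact m2 * fact m3) = fact (m1 + m2 + m3)"
proof -
  let ?M = "block_mset m1 m2 m3"
  have "(\<Prod>b\<in>set_mset ?M. fact (count ?M b)) = (\<Prod>b\<in>UNIV. fact (count ?M b) :: nat)"
    by (intro prod.mono_neutral_left) (auto simp: not_in_iff)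
  also have "\<dots> = fact m1 * fact m2 * fact m3"
    by (simp add: UNIV_block block_mset_def)
  finally show ?thesis
    using card_permutations_of_multiset_aux[of ?M] by (simp add: block_mset_def)
qed

lemma blocks_word_permutations:
  assumes "bs \<in> permutations_of_multiset (block_mset m1 m2 m3)"
  shows "length (blocks_word bs) = 3*m1 + 5*m2 + 4*m3 + 2"
    and "houses (blocks_word bs) = 2*m1 + 3*m2 + 2*m3 + 2"
proof -
  have "mset bs = block_mset m1 m2 m3"
    using assms by (rule permutations_of_multisetD)
  then have sum_list_eq: "(\<Sum>b\<leftarrow>bs. f b) = (\<Sum>b\<in>#block_mset m1 m2 m3. f b)" for f :: "block \<Rightarrow> nat"
    by (metis mset_map sum_mset_sum_list)
  show "length (blocks_word bs) = 3*m1 + 5*m2 + 4*m3 + 2"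
    unfolding length_blocks_word sum_list_eq by (simp add: block_mset_def)
  show "houses (blocks_word bs) = 2*m1 + 3*m2 + 2*m3 + 2"
    unfolding houses_blocks_word sum_list_eq by (simp add: block_mset_def houses_def)
qed

lemma fact_le_card_resistant:
  "fact (m1 + m2 + m3) \<le> card {c. length c = 3*m1 + 5*m2 + 4*m3 + 2 \<and> houses c = 2*m1 + 3*m2 + 2*m3 + 2 \<and> resistant c}
     * (fact m1 * fact m2 * fact m3)"
proof -
  let ?P = "permutations_of_multiset (block_mset m1 m2 m3)"
  let ?R = "{c. length c = 3*m1 + 5*m2 + 4*m3 + 2 \<and> houses c = 2*m1 + 3*m2 + 2*m3 + 2 \<and> resistant c}"
  have "card ?P = card (blocks_word ` ?P)"
    using inj_on_subset[OF inj_blocks_word subset_UNIV] by (rule card_image[symmetric])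
  also have "\<dots> \<le> card ?R"
  proof (rule card_mono)
    show "finite ?R"
      by (rule finite_bool_lists_length)
    show "blocks_word ` ?P \<subseteq> ?R"
    proof (rule image_subsetI)
      fix bs assume "bs \<in> ?P"
      then show "blocks_word bs \<in> ?R"
        using blocks_word_permutations[of bs] anchored_blocks_word[of bs] by (simp add: anchored_def)
    qed
  qed
  finally have "card ?P * (fact m1 * fact m2 * fact m3) \<le> card ?R * (fact m1 * fact m2 * fact m3)"
    by (rule mult_le_mono1)
  then show ?thesis
    unfolding card_permutations_block_mset .
qed

lemma ln_J_A_ge:
  "real (m1 + m2 + m3) * ln (real (m1 + m2 + m3))
     - ((real m1 + 1) * ln (real m1 + 1) + (real m2 + 1) * ln (real m2 + 1) + (real m3 + 1) * ln (real m3 + 1))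
   \<le> ln (real (J_A (2*m1 + 3*m2 + 2*m3 + 2) (3*m1 + 5*m2 + 4*m3 + 2)))"
proof -
  let ?c = "card {c. length c = 3*m1 + 5*m2 + 4*m3 + 2 \<and> houses c = 2*m1 + 3*m2 + 2*m3 + 2 \<and> resistant c}"
  have fact_le: "fact (m1 + m2 + m3) \<le> real ?c * (fact m1 * fact m2 * fact m3)"
    using of_nat_mono[OF fact_le_card_resistant[of m1 m2 m3], where 'a = real] by simp
  have "0 < ?c"
  proof (rule Nat.gr0I)
    assume "?c = 0"
    then show False
      using fact_le fact_gt_zero[of "m1 + m2 + m3", where 'a = real] by simp
  qed
  have "ln (fact (m1 + m2 + m3)) \<le> ln (real ?c * (fact m1 * fact m2 * fact m3))"
    using fact_le \<open>0 < ?c\<close> by (subst ln_le_cancel_iff) auto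
  also have "\<dots> = ln (real ?c) + ln (fact m1) + ln (fact m2) + ln (fact m3)"
    using \<open>0 < ?c\<close> by (simp add: ln_mult)
  finally have "ln (fact (m1 + m2 + m3)) \<le> ln (real ?c) + ln (fact m1) + ln (fact m2) + ln (fact m3)" .
  moreover have "ln (real ?c) \<le> ln (real (J_A (2*m1 + 3*m2 + 2*m3 + 2) (3*m1 + 5*m2 + 4*m3 + 2)))"
    using \<open>0 < ?c\<close> by (simp add: J_A_def)
  ultimately show ?thesis
    using ln_fact_ge[of "m1 + m2 + m3"] ln_fact_le[of m1] ln_fact_le[of m2] ln_fact_le[of m3] by linarith
qed

lemma tendsto_block_counts_div:
  fixes m1 m2 m3 :: "nat \<Rightarrow> nat" and c0 c1 c2 c3 :: nat and p1 p2 p3 :: real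
  assumes m1: "((\<lambda>i. real (m1 i) / real i) \<longlongrightarrow> p1) sequentially"
    and m2: "((\<lambda>i. real (m2 i) / real i) \<longlongrightarrow> p2) sequentially"
    and m3: "((\<lambda>i. real (m3 i) / real i) \<longlongrightarrow> p3) sequentially"
  shows "((\<lambda>i. real (c1 * m1 i + c2 * m2 i + c3 * m3 i + c0) / real i)
      \<longlongrightarrow> c1 * p1 + c2 * p2 + c3 * p3) sequentially"
proof -
  have "((\<lambda>i. real c1 * (real (m1 i) / real i) + real c2 * (real (m2 i) / real i)
      + real c3 * (real (m3 i) / real i) + real c0 * (1 / real i))
      \<longlongrightarrow> real c1 * p1 + real c2 * p2 + real c3 * p3 + real c0 * 0) sequentially"
    by (intro tendsto_intros m1 m2 m3 lim_1_over_n)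
  then show ?thesis
    by (simp add: add_divide_distrib)
qed

lemma limsup_ln_J_A_ge:
  fixes m1 m2 m3 :: "nat \<Rightarrow> nat"
  assumes m1: "((\<lambda>i. real (m1 i) / real i) \<longlongrightarrow> p1) sequentially"
    and m2: "((\<lambda>i. real (m2 i) / real i) \<longlongrightarrow> p2) sequentially"
    and m3: "((\<lambda>i. real (m3 i) / real i) \<longlongrightarrow> p3) sequentially"
    and p: "0 < p1" "0 < p2" "0 < p3" "p1 + p2 + p3 = 1"
  defines "N \<equiv> \<lambda>i. 3 * m1 i + 5 * m2 i + 4 * m3 i + 2" and "K \<equiv> \<lambda>i. 2 * m1 i + 3 * m2 i + 2 * m3 i + 2"
  shows "ereal (- (p1 * ln p1 + p2 * ln p2 + p3 * ln p3) / (3*p1 + 5*p2 + 4*p3))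
    \<le> limsup (\<lambda>i. ereal (ln (real (J_A (K i) (N i))) / real (N i)))"
proof -
  define E where "E i = real (m1 i + m2 i + m3 i) * ln (real (m1 i + m2 i + m3 i))
      - ((real (m1 i) + 1) * ln (real (m1 i) + 1) + (real (m2 i) + 1) * ln (real (m2 i) + 1)
         + (real (m3 i) + 1) * ln (real (m3 i) + 1))" for i
  have E: "((\<lambda>i. E i / real i) \<longlongrightarrow> - (p1 * ln p1 + p2 * ln p2 + p3 * ln p3)) sequentially"
    unfolding E_def using m1 m2 m3 p by (rule entropy_bound_tendsto)
  have N_div: "((\<lambda>i. real (N i) / real i) \<longlongrightarrow> 3*p1 + 5*p2 + 4*p3) sequentially"
    using tendsto_block_counts_div[OF m1 m2 m3, of 3 5 4 2] by (simp add: N_def)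
  have "eventually (\<lambda>i. ereal ((E i / real i) / (real (N i) / real i))
      \<le> ereal (ln (real (J_A (K i) (N i))) / real (N i))) sequentially"
    using eventually_gt_at_top[of 0]
  proof eventually_elim
    case (elim i)
    have "E i / real (N i) \<le> ln (real (J_A (K i) (N i))) / real (N i)"
      unfolding E_def K_def N_def by (intro divide_right_mono ln_J_A_ge) simp
    then show ?case
      using elim by simp
  qed
  then have "limsup (\<lambda>i. ereal ((E i / real i) / (real (N i) / real i)))
      \<le> limsup (\<lambda>i. ereal (ln (real (J_A (K i) (N i))) / real (N i)))"
    by (rule Limsup_mono)
  moreover have "limsup (\<lambda>i. ereal ((E i / real i) / (real (N i) / real i)))
      = ereal (- (p1 * ln p1 + p2 * ln p2 + p3 * ln p3) / (3*p1 + 5*p2 + 4*p3))"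
    using E N_div p
    by (intro lim_imp_Limsup trivial_limit_sequentially, unfold lim_ereal) (intro tendsto_divide, auto)
  ultimately show ?thesis
    by simp
qed

lemma S_A_ge:
  fixes p1 p2 p3 :: real
  assumes p: "0 < p1" "0 < p2" "0 < p3" "p1 + p2 + p3 = 1"
  shows "ereal (- (p1 * ln p1 + p2 * ln p2 + p3 * ln p3) / (3*p1 + 5*p2 + 4*p3))
    \<le> S_A ((2*p1 + 3*p2 + 2*p3) / (3*p1 + 5*p2 + 4*p3))"
proof -
  define \<nu> where "\<nu> = 3*p1 + 5*p2 + 4*p3"
  have "0 < \<nu>"
    using p by (simp add: \<nu>_def)
  define m1 where "m1 i = nat \<lfloor>real i * p1\<rfloor>" for i
  define m2 where "m2 i = nat \<lfloor>real i * p2\<rfloor>" for i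
  define m3 where "m3 i = nat \<lfloor>real i * p3\<rfloor>" for i
  define N where "N i = 3 * m1 i + 5 * m2 i + 4 * m3 i + 2" for i
  define K where "K i = 2 * m1 i + 3 * m2 i + 2 * m3 i + 2" for i
  have m1: "((\<lambda>i. real (m1 i) / real i) \<longlongrightarrow> p1) sequentially"
    unfolding m1_def using p(1) by (intro tendsto_nat_floor_mult_div) simp
  have m2: "((\<lambda>i. real (m2 i) / real i) \<longlongrightarrow> p2) sequentially"
    unfolding m2_def using p(2) by (intro tendsto_nat_floor_mult_div) simp
  have m3: "((\<lambda>i. real (m3 i) / real i) \<longlongrightarrow> p3) sequentially"
    unfolding m3_def using p(3) by (intro tendsto_nat_floor_mult_div) simp
  have N_div: "((\<lambda>i. real (N i) / real i) \<longlongrightarrow> \<nu>) sequentially"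
    using tendsto_block_counts_div[OF m1 m2 m3, of 3 5 4 2] by (simp add: N_def \<nu>_def)
  have K_div: "((\<lambda>i. real (K i) / real i) \<longlongrightarrow> 2*p1 + 3*p2 + 2*p3) sequentially"
    using tendsto_block_counts_div[OF m1 m2 m3, of 2 3 2 2] by (simp add: K_def)
  have "((\<lambda>i. (real (K i) / real i) / (real (N i) / real i)) \<longlongrightarrow> (2*p1 + 3*p2 + 2*p3) / \<nu>) sequentially"
    using \<open>0 < \<nu>\<close> by (intro tendsto_divide K_div N_div) auto
  then have KN: "((\<lambda>i. real (K i) / real (N i)) \<longlongrightarrow> (2*p1 + 3*p2 + 2*p3) / \<nu>) sequentially"
    by (rule Lim_transform_eventually) (use eventually_gt_at_top[of 0] in \<open>eventually_elim, simp\<close>)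
  have "filterlim (\<lambda>i. real (N i)) at_top sequentially"
  proof (rule filterlim_at_top_mono)
    show "filterlim (\<lambda>i. real (N i) / real i * real i) at_top sequentially"
      by (rule filterlim_tendsto_pos_mult_at_top[OF N_div \<open>0 < \<nu>\<close> filterlim_real_sequentially])
    show "eventually (\<lambda>i. real (N i) / real i * real i \<le> real (N i)) sequentially"
      using eventually_gt_at_top[of 0] by eventually_elim simp
  qed
  then have "(K, N) \<in> {kn. filterlim (snd kn) at_top sequentially \<and>
                 ((\<lambda>i. real (fst kn i) / real (snd kn i)) \<longlongrightarrow> (2*p1 + 3*p2 + 2*p3) / \<nu>) sequentially}"
    using KN by (simp add: filterlim_sequentially_iff_filterlim_real)
  then show ?thesis
    unfolding S_A_def \<nu>_def
    by (rule SUP_upper2) (use limsup_ln_J_A_ge[OF m1 m2 m3 p] in \<open>simp only: N_def K_def fst_conv snd_conv\<close>)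
qed

section \<open>The saddle point\<close>

lemma S_A_at_saddle_point:
  fixes t u :: real
  assumes t: "0 < t" and u: "0 < u" and saddle: "t^3 * u^2 + t^5 * u^3 + t^4 * u^2 = 1"
    and \<rho>: "\<rho> = (2 * (t^3 * u^2) + 3 * (t^5 * u^3) + 2 * (t^4 * u^2)) / (3 * (t^3 * u^2) + 5 * (t^5 * u^3) + 4 * (t^4 * u^2))"
  shows "S_A \<rho> = ereal (- ln t - \<rho> * ln u)"
proof -
  define p1 where "p1 = t^3 * u^2"
  define p2 where "p2 = t^5 * u^3"
  define p3 where "p3 = t^4 * u^2"
  define \<nu> where "\<nu> = 3*p1 + 5*p2 + 4*p3"
  have p: "0 < p1" "0 < p2" "0 < p3" "p1 + p2 + p3 = 1"
    using t u saddle by (simp_all add: p1_def p2_def p3_def)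
  then have "0 < \<nu>"
    by (simp add: \<nu>_def)
  have "- (p1 * ln p1 + p2 * ln p2 + p3 * ln p3) = \<nu> * (- ln t) - (2*p1 + 3*p2 + 2*p3) * ln u"
    using t u by (simp add: p1_def p2_def p3_def \<nu>_def ln_mult ln_realpow algebra_simps)
  then have entropy: "- (p1 * ln p1 + p2 * ln p2 + p3 * ln p3) / \<nu> = - ln t - \<rho> * ln u"
    using \<open>0 < \<nu>\<close> by (simp add: \<rho> \<nu>_def p1_def p2_def p3_def field_simps)
  have "p1 * ln p1 \<le> 0" "p2 * ln p2 \<le> 0" "p3 * ln p3 \<le> 0"
    using p by (auto intro!: mult_nonneg_nonpos)
  then have "0 \<le> - ln t - \<rho> * ln u"
    unfolding entropy[symmetric] using \<open>0 < \<nu>\<close> by simp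
  then have "S_A \<rho> \<le> ereal (- ln t - \<rho> * ln u)"
    using S_A_le[OF t u] saddle by (metis max.absorb2 order_refl)
  moreover have "ereal (- ln t - \<rho> * ln u) \<le> S_A \<rho>"
    using S_A_ge[OF p] entropy unfolding \<rho> \<nu>_def p1_def p2_def p3_def by simp
  ultimately show ?thesis
    by (rule antisym)
qed

lemma riviera_saddle_point:
  fixes \<rho> :: real
  assumes "1/2 < \<rho>" and "\<rho> < 2/3"
  obtains t u where "0 < t" "0 < u" "t^3 * u^2 + t^5 * u^3 + t^4 * u^2 = 1"
    "\<rho> = (2 * (t^3 * u^2) + 3 * (t^5 * u^3) + 2 * (t^4 * u^2)) / (3 * (t^3 * u^2) + 5 * (t^5 * u^3) + 4 * (t^4 * u^2))"
    "- ln t - \<rho> * ln u = (1 - \<rho>) * ln (1 - \<rho>) - (2*\<rho> - 1) * ln (2*\<rho> - 1) - (2 - 3*\<rho>) * ln (2 - 3*\<rho>)"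
proof -
  define a1 where "a1 = 1 - \<rho>"
  define a2 where "a2 = 2*\<rho> - 1"
  define a3 where "a3 = 2 - 3*\<rho>"
  have a: "0 < a1" "0 < a2" "0 < a3" "a1 = a2 + a3"
    using assms by (simp_all add: a1_def a2_def a3_def)
  define t where "t = a3^2 / (a1 * a2)"
  define u where "u = a2^2 * a1 / a3^3"
  have "0 < t" "0 < u"
    using a by (simp_all add: t_def u_def)
  have p1: "t^3 * u^2 = a2 / a1" and p2: "t^5 * u^3 = a2 * a3 / a1^2" and p3: "t^4 * u^2 = a3^2 / a1^2"
    unfolding t_def u_def using a(1-3) by (simp_all add: field_simps eval_nat_numeral)
  have "a2 * a1 + a2 * a3 + a3^2 = a1^2"
    unfolding a(4) by (simp add: power2_eq_square algebra_simps)
  moreover have "t^3 * u^2 + t^5 * u^3 + t^4 * u^2 = (a2 * a1 + a2 * a3 + a3^2) / a1^2"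
    unfolding p1 p2 p3 using a(1) by (simp add: field_simps power2_eq_square)
  ultimately have "t^3 * u^2 + t^5 * u^3 + t^4 * u^2 = 1"
    using a(1) by simp
  moreover have "\<rho> = (2 * (t^3 * u^2) + 3 * (t^5 * u^3) + 2 * (t^4 * u^2)) / (3 * (t^3 * u^2) + 5 * (t^5 * u^3) + 4 * (t^4 * u^2))"
  proof -
    have "2 * (t^3 * u^2) + 3 * (t^5 * u^3) + 2 * (t^4 * u^2) = (2*a2*a1 + 3*a2*a3 + 2*a3^2) / a1^2"
      and "3 * (t^3 * u^2) + 5 * (t^5 * u^3) + 4 * (t^4 * u^2) = (3*a2*a1 + 5*a2*a3 + 4*a3^2) / a1^2"
      unfolding p1 p2 p3 using a(1) by (simp_all add: field_simps power2_eq_square)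
    moreover have "2*a2*a1 + 3*a2*a3 + 2*a3^2 = \<rho> * (3*a2*a1 + 5*a2*a3 + 4*a3^2)"
      by (simp add: a1_def a2_def a3_def algebra_simps power2_eq_square)
    moreover have "0 < 3*a2*a1 + 5*a2*a3 + 4*a3^2"
      using a(1-3) by (simp add: add_pos_pos)
    ultimately show ?thesis
      using a(1) by simp
  qed
  moreover have "- ln t - \<rho> * ln u = (1 - \<rho>) * ln (1 - \<rho>) - (2*\<rho> - 1) * ln (2*\<rho> - 1) - (2 - 3*\<rho>) * ln (2 - 3*\<rho>)"
  proof -
    have ln_t: "ln t = 2 * ln a3 - ln a1 - ln a2" and ln_u: "ln u = 2 * ln a2 + ln a1 - 3 * ln a3"
      unfolding t_def u_def using a(1-3) by (simp_all add: ln_div ln_mult ln_realpow)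
    show ?thesis
      unfolding ln_t ln_u by (simp add: a1_def a2_def a3_def algebra_simps)
  qed
  ultimately show thesis
    using that \<open>0 < t\<close> \<open>0 < u\<close> by blast
qed

theorem mainTheorem2:
  fixes \<rho> :: real
  assumes "1/2 < \<rho>" and "\<rho> < 2/3"
  shows "S_A \<rho> = ereal ((1 - \<rho>) * ln (1 - \<rho>) - (2*\<rho> - 1) * ln (2*\<rho> - 1)
                          - (2 - 3*\<rho>) * ln (2 - 3*\<rho>))"
proof -
  obtain t u where "0 < t" "0 < u" "t^3 * u^2 + t^5 * u^3 + t^4 * u^2 = 1"
    and \<rho>: "\<rho> = (2 * (t^3 * u^2) + 3 * (t^5 * u^3) + 2 * (t^4 * u^2)) / (3 * (t^3 * u^2) + 5 * (t^5 * u^3) + 4 * (t^4 * u^2))"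
    and rate: "- ln t - \<rho> * ln u = (1 - \<rho>) * ln (1 - \<rho>) - (2*\<rho> - 1) * ln (2*\<rho> - 1) - (2 - 3*\<rho>) * ln (2 - 3*\<rho>)"
    using riviera_saddle_point[OF assms] .
  then show ?thesis
    using S_A_at_saddle_point[OF \<open>0 < t\<close> \<open>0 < u\<close>] by simp
qed

end
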